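(* Let $\alpha>-\tfrac12$ be a real number which is not an integer. For $R\in]0,1[$ let $\varphi_{\alpha,R}(\theta)=(1-Re^{i\theta})^{\alpha}(1+Re^{-i\theta})^{\alpha}$ for $\theta\in]-\pi,\pi]$, and let $\varphi_\alpha=\lim_{R\to1^-}\varphi_{\alpha,R}$. Then the Fourier coefficients $\widehat{\varphi_\alpha}(n)$ satisfy $$\widehat{\varphi_\alpha}(n)=\frac{2^{\alpha}}{\Gamma(-\alpha)}\,n^{-\alpha-1}+o(n^{-\alpha-1})\quad\text{as } n\to+\infty,$$ $$\widehat{\varphi_\alpha}(n)=(-1)^n\frac{2^{\alpha}}{\Gamma(-\alpha)}\,(-n)^{-\alpha-1}+o(|n|^{-\alpha-1})\quad\text{as } n\to-\infty .$$
   Context: Powers $z^\alpha$ are taken with the principal branch (the bases $1-Re^{i\theta}$, $1+Re^{-i\theta}$ have positive real part for $R<1$). For an integrable function $h$ on $]-\pi,\pi]$, $\widehat h(s)=\frac1{2\pi}\int_{-\pi}^{\pi}h(\theta)e^{-is\theta}\,d\theta$ for $s\in\mathbb Z$; $\widehat{\varphi_\alpha}(n)$ is also the limit as $R\to1^-$ of $\widehat{\varphi_{\alpha,R}}(n)$. *)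

theory Defs
  imports "HOL-Analysis.Analysis" "HOL-Library.Landau_Symbols"
begin

text \<open>phi_{alpha,R}(theta) = (1 - R e^{i theta})^alpha (1 + R e^{-i theta})^alpha, principal branch
  (Isabelle's complex powr is exp (a * Ln z) with the principal logarithm).\<close>
definition phiR :: "real \<Rightarrow> real \<Rightarrow> real \<Rightarrow> complex" where
  "phiR \<alpha> R \<theta> = (1 - of_real R * cis \<theta>) powr (of_real \<alpha>) * (1 + of_real R * cis (-\<theta>)) powr (of_real \<alpha>)"

definition phi :: "real \<Rightarrow> real \<Rightarrow> complex" where
  "phi \<alpha> \<theta> = Lim (at_left 1) (\<lambda>R. phiR \<alpha> R \<theta>)"

definition fourier_coeff :: "(real \<Rightarrow> complex) \<Rightarrow> int \<Rightarrow> complex" where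
  "fourier_coeff h s = integral {-pi..pi} (\<lambda>\<theta>. h \<theta> * exp (- \<i> * of_int s * of_real \<theta>)) / of_real (2 * pi)"

end

theory Submission
  imports Defs
begin

text \<open>
  Expanding both factors binomially, phi_{alpha,R}(theta) = (sum_k a_k R^k e^{ik theta})
  (sum_j b_j R^j e^{-ij theta}) with a_k = (-alpha)_k / k! and b_j = (alpha choose j), so
  orthogonality of the characters gives, for n >= 0, hat phi_{alpha,R}(n) = sum_j b_j a_{n+j} R^{n+2j}
  and hat phi_{alpha,R}(-n) = (-1)^n hat phi_{alpha,R}(n).  For alpha > -1 the functions phi_{alpha,R},
  R >= 1/2, are dominated by the integrable C (|theta|^alpha + (pi - |theta|)^alpha), so the Fourier
  coefficients of phi_alpha are the limits as R tends to 1.  For n > alpha the ratios a_{n+j} / a_n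
  decrease in j, and summation by parts against the partial sums of sum_j b_j = 2^alpha (Abel's
  theorem for the binomial series) shows that the limit is a_n rho_n with rho_n tending to 2^alpha.
  Finally a_n n^{alpha+1} tends to 1 / Gamma(-alpha) by Gauss's product formula.
\<close>

section \<open>Summation by parts against decreasing weights\<close>

lemma decseq_nonneg_limit:
  fixes v :: "nat \<Rightarrow> real"
  assumes "\<And>j. 0 \<le> v j" "\<And>j. v (Suc j) \<le> v j"
  obtains L where "v \<longlonglongrightarrow> L" "0 \<le> L" "\<And>j. L \<le> v j"
proof -
  have "decseq v" using assms(2) by (simp add: decseq_SucI)
  then obtain L where "v \<longlonglongrightarrow> L" "\<forall>i. L \<le> v i"
    using decseq_convergent[of v 0] assms(1) by blast
  moreover have "0 \<le> L" using \<open>v \<longlonglongrightarrow> L\<close> assms(1) by (intro LIMSEQ_le_const) auto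
  ultimately show ?thesis using that by blast
qed

lemma summable_mult_decseq_diff:
  fixes v E :: "nat \<Rightarrow> real"
  assumes "\<And>j. 0 \<le> v j" "\<And>j. v (Suc j) \<le> v j" "\<And>j. \<bar>E j\<bar> \<le> B"
  shows "summable (\<lambda>j. E j * (v j - v (Suc j)))"
proof -
  obtain L where L: "v \<longlonglongrightarrow> L" using decseq_nonneg_limit[of v, OF assms(1,2)] by blast
  have "summable (\<lambda>j. B * (v j - v (Suc j)))"
    by (intro summable_mult telescope_summable'[OF L])
  moreover have "norm (E j * (v j - v (Suc j))) \<le> B * (v j - v (Suc j))" for j
    using assms(2)[of j] assms(3)[of j] by (simp add: abs_mult mult_right_mono)
  ultimately show ?thesis by (rule summable_comparison_test'[where N=0])
qed

lemma suminf_mult_decseq_diff_tail_bound: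
  fixes v E :: "nat \<Rightarrow> real"
  assumes "\<And>j. 0 \<le> v j" "\<And>j. v (Suc j) \<le> v j" "\<And>j. \<bar>E j\<bar> \<le> B"
    and "\<And>j. j \<ge> J \<Longrightarrow> \<bar>E j\<bar> \<le> e" "v J \<le> M" "0 \<le> e"
  shows "\<bar>(\<Sum>j. E j * (v j - v (Suc j))) - (\<Sum>j<J. E j * (v j - v (Suc j)))\<bar> \<le> e * M"
proof -
  define f where "f = (\<lambda>j. E j * (v j - v (Suc j)))"
  have sf: "summable f" unfolding f_def by (rule summable_mult_decseq_diff[of v E B, OF assms(1-3)])
  obtain L where L: "v \<longlonglongrightarrow> L" "0 \<le> L" using decseq_nonneg_limit[of v, OF assms(1,2)] by blast
  have LJ: "(\<lambda>n. v (n + J)) \<longlonglongrightarrow> L" using L(1) by (rule LIMSEQ_ignore_initial_segment)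
  have ts: "(\<lambda>n. e * (v (n + J) - v (Suc (n + J)))) sums (e * (v J - L))"
    using sums_mult[OF telescope_sums'[OF LJ], of e] by simp
  have bnd: "\<bar>f (n + J)\<bar> \<le> e * (v (n + J) - v (Suc (n + J)))" for n
    unfolding f_def using assms(2)[of "n+J"] assms(4)[of "n+J"]
    by (simp add: abs_mult mult_right_mono)
  have sabs: "summable (\<lambda>n. \<bar>f (n + J)\<bar>)"
    by (rule summable_comparison_test'[OF sums_summable[OF ts], where N=0]) (use bnd in auto)
  have "\<bar>(\<Sum>n. f (n + J))\<bar> \<le> (\<Sum>n. \<bar>f (n + J)\<bar>)" by (rule summable_rabs[OF sabs])
  also have "\<dots> \<le> (\<Sum>n. e * (v (n + J) - v (Suc (n + J))))"
    by (rule suminf_le[OF bnd sabs sums_summable[OF ts]])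
  also have "\<dots> = e * (v J - L)" using ts by (simp add: sums_iff)
  also have "\<dots> \<le> e * M" using assms(5,6) L(2) by (simp add: mult_left_mono)
  finally show ?thesis using suminf_split_initial_segment[OF sf, of J] unfolding f_def by simp
qed

text \<open>A null sequence \<open>E\<close> makes the tails uniformly small, since the weights are nonnegative,
  decreasing and bounded by \<open>M\<close>; the finitely many remaining terms converge termwise.\<close>

lemma tendsto_suminf_mult_decseq_diff:
  fixes E :: "nat \<Rightarrow> real" and w :: "'a \<Rightarrow> nat \<Rightarrow> real"
  assumes E: "E \<longlonglongrightarrow> 0"
    and ev: "eventually (\<lambda>t. (\<forall>j. 0 \<le> w t j \<and> w t (Suc j) \<le> w t j) \<and> w t 0 \<le> M) F"
    and lim: "\<And>j. ((\<lambda>t. w t j) \<longlongrightarrow> W j) F"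
    and W: "\<And>j. 0 \<le> W j" "\<And>j. W (Suc j) \<le> W j" "W 0 \<le> M"
  shows "((\<lambda>t. \<Sum>j. E j * (w t j - w t (Suc j))) \<longlongrightarrow> (\<Sum>j. E j * (W j - W (Suc j)))) F"
proof (rule tendstoI)
  fix \<epsilon> :: real assume \<epsilon>: "\<epsilon> > 0"
  obtain B where B: "\<And>j. \<bar>E j\<bar> \<le> B"
    using convergent_imp_Bseq[of E] E unfolding Bseq_def convergent_def by force
  define e where "e = \<epsilon> / (4 * (\<bar>M\<bar> + 1))"
  have e: "e > 0" using \<epsilon> by (simp add: e_def)
  have M0: "0 \<le> M" using W(1)[of 0] W(3) by simp
  have eM: "e * M \<le> \<epsilon> / 4" using M0 \<epsilon> by (simp add: e_def field_simps)
  obtain J where J: "\<And>j. j \<ge> J \<Longrightarrow> \<bar>E j\<bar> \<le> e"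
    using E e unfolding LIMSEQ_def by (force simp: dist_real_def)
  have WJ: "W J \<le> M" using decseqD[of W 0 J] W(2,3) by (simp add: decseq_SucI)
  have "((\<lambda>t. \<Sum>j<J. E j * (w t j - w t (Suc j))) \<longlongrightarrow> (\<Sum>j<J. E j * (W j - W (Suc j)))) F"
    by (intro tendsto_intros lim)
  from tendstoD[OF this, of "\<epsilon>/2"] \<epsilon>
  have "eventually (\<lambda>t. dist (\<Sum>j<J. E j * (w t j - w t (Suc j))) (\<Sum>j<J. E j * (W j - W (Suc j))) < \<epsilon>/2) F"
    by simp
  with ev show "eventually (\<lambda>t. dist (\<Sum>j. E j * (w t j - w t (Suc j))) (\<Sum>j. E j * (W j - W (Suc j))) < \<epsilon>) F"
  proof eventually_elim
    case (elim t)
    have wJ: "w t J \<le> M" using decseqD[of "w t" 0 J] elim(1) by (simp add: decseq_SucI)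
    have tail_wt: "\<bar>(\<Sum>j. E j * (w t j - w t (Suc j))) - (\<Sum>j<J. E j * (w t j - w t (Suc j)))\<bar> \<le> e * M"
      by (rule suminf_mult_decseq_diff_tail_bound[of "w t" E B J e M, OF _ _ B J wJ])
        (use elim(1) e in auto)
    have tail_W: "\<bar>(\<Sum>j. E j * (W j - W (Suc j))) - (\<Sum>j<J. E j * (W j - W (Suc j)))\<bar> \<le> e * M"
      by (rule suminf_mult_decseq_diff_tail_bound[of W E B J e M, OF W(1,2) B J WJ]) (use e in auto)
    have triangle: "\<bar>a - a'\<bar> < \<epsilon>"
      if "\<bar>a - b\<bar> \<le> c" "\<bar>a' - b'\<bar> \<le> c" "\<bar>b - b'\<bar> < \<epsilon>/2" "c \<le> \<epsilon>/4" for a b a' b' c :: real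
      using that by linarith
    show ?case
      unfolding dist_real_def by (rule triangle[OF tail_wt tail_W _ eM]) (use elim(2) in \<open>simp add: dist_real_def\<close>)
  qed
qed

lemma abel_partial_summation:
  fixes x w :: "nat \<Rightarrow> real"
  shows "(\<Sum>j<N. x j * w j) = (\<Sum>i<N. x i) * w N + S * (w 0 - w N)
           + (\<Sum>j<N. ((\<Sum>i<Suc j. x i) - S) * (w j - w (Suc j)))"
proof (induction N)
  case (Suc N)
  let ?X = "\<Sum>i<N. x i"
  have "(\<Sum>j<Suc N. x j * w j) = ?X * w N + S * (w 0 - w N)
           + (\<Sum>j<N. ((\<Sum>i<Suc j. x i) - S) * (w j - w (Suc j))) + x N * w N" using Suc by simp
  also have "\<dots> = (?X + x N) * w (Suc N) + S * (w 0 - w (Suc N))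
           + ((\<Sum>j<N. ((\<Sum>i<Suc j. x i) - S) * (w j - w (Suc j))) + ((?X + x N) - S) * (w N - w (Suc N)))"
    by (simp add: algebra_simps)
  finally show ?case by simp
qed simp

lemma sums_abel_summation:
  fixes x w :: "nat \<Rightarrow> real"
  assumes x: "x sums S" and w: "\<And>j. 0 \<le> w j" "\<And>j. w (Suc j) \<le> w j" "w \<longlonglongrightarrow> 0"
  shows "(\<lambda>j. x j * w j) sums (S * w 0 + (\<Sum>j. ((\<Sum>i<Suc j. x i) - S) * (w j - w (Suc j))))"
proof -
  define E where "E = (\<lambda>j. (\<Sum>i<Suc j. x i) - S)"
  have X: "(\<lambda>N. \<Sum>i<N. x i) \<longlonglongrightarrow> S" using x by (simp add: sums_def)
  have "E \<longlonglongrightarrow> 0" unfolding E_def using LIMSEQ_Suc[OF X] by (simp add: LIM_zero)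
  then obtain B where B: "\<And>j. \<bar>E j\<bar> \<le> B"
    using convergent_imp_Bseq[of E] unfolding Bseq_def convergent_def by force
  have "(\<lambda>N. (\<Sum>i<N. x i) * w N + S * (w 0 - w N) + (\<Sum>j<N. E j * (w j - w (Suc j))))
          \<longlonglongrightarrow> S * 0 + S * (w 0 - 0) + (\<Sum>j. E j * (w j - w (Suc j)))"
    by (intro tendsto_intros X w(3) summable_LIMSEQ summable_mult_decseq_diff[of w E B, OF w(1,2) B])
  moreover have "(\<lambda>N. \<Sum>j<N. x j * w j)
      = (\<lambda>N. (\<Sum>i<N. x i) * w N + S * (w 0 - w N) + (\<Sum>j<N. E j * (w j - w (Suc j))))"
    unfolding E_def by (rule ext) (rule abel_partial_summation)
  ultimately have "(\<lambda>N. \<Sum>j<N. x j * w j) \<longlonglongrightarrow> S * w 0 + (\<Sum>j. E j * (w j - w (Suc j)))"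
    by simp
  thus ?thesis by (simp add: sums_def E_def)
qed

section \<open>The binomial coefficients\<close>

text \<open>Taylor coefficients of \<open>(1 - z) powr \<alpha>\<close>.\<close>

definition acoef :: "real \<Rightarrow> nat \<Rightarrow> real" where
  "acoef \<alpha> k = pochhammer (-\<alpha>) k / fact k"

lemma gbinomial_eq_acoef: "\<alpha> gchoose k = (-1)^k * acoef \<alpha> k"
  by (simp add: acoef_def gbinomial_pochhammer)

lemma acoef_Suc: "acoef \<alpha> (Suc m) = acoef \<alpha> m * ((real m - \<alpha>) / (real m + 1))"
  by (simp add: acoef_def pochhammer_Suc field_simps)

lemma acoef_nonzero:
  assumes "\<alpha> \<notin> \<int>"
  shows "acoef \<alpha> m \<noteq> 0"
proof
  assume "acoef \<alpha> m = 0"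
  then obtain k where "-\<alpha> = - of_nat k" by (auto simp: acoef_def pochhammer_eq_0_iff)
  with assms show False by simp
qed

lemma tendsto_acoef_mult_powr:
  "(\<lambda>n. acoef \<alpha> n * real n powr (\<alpha> + 1)) \<longlonglongrightarrow> rGamma (-\<alpha>)"
proof -
  have lim: "(\<lambda>n. rGamma_series (-\<alpha>) n * (real n / (real n - \<alpha>))) \<longlonglongrightarrow> rGamma (-\<alpha>) * 1"
    by (intro tendsto_intros rGamma_series_LIMSEQ) real_asymp
  have "eventually (\<lambda>n. rGamma_series (-\<alpha>) n * (real n / (real n - \<alpha>))
          = acoef \<alpha> n * real n powr (\<alpha> + 1)) sequentially"
    using eventually_gt_at_top[of "nat \<lceil>\<alpha>\<rceil>"]
  proof eventually_elim
    case (elim n)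
    hence n: "real n > \<alpha>" "n > 0" by linarith+
    have "rGamma_series (-\<alpha>) n = pochhammer (-\<alpha>) n * (real n - \<alpha>) / (fact n * real n powr (-\<alpha>))"
      using n by (simp add: rGamma_series_def pochhammer_Suc powr_def)
    also have "\<dots> = acoef \<alpha> n * (real n - \<alpha>) * real n powr \<alpha>"
      using n by (simp add: acoef_def powr_minus field_simps)
    finally show ?case using n by (simp add: powr_add divide_simps)
  qed
  with lim show ?thesis by (simp add: Lim_transform_eventually)
qed

lemma acoef_tendsto_zero:
  assumes "\<alpha> > -1"
  shows "acoef \<alpha> \<longlonglongrightarrow> 0"
proof -
  have "(\<lambda>n. (acoef \<alpha> n * real n powr (\<alpha> + 1)) * real n powr (-(\<alpha>+1))) \<longlonglongrightarrow> rGamma (-\<alpha>) * 0"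
    using assms
    by (intro tendsto_intros tendsto_acoef_mult_powr tendsto_neg_powr filterlim_real_sequentially)
      auto
  moreover have "eventually (\<lambda>n. (acoef \<alpha> n * real n powr (\<alpha> + 1)) * real n powr (-(\<alpha>+1))
                   = acoef \<alpha> n) sequentially"
    using eventually_gt_at_top[of 0] by eventually_elim (simp add: powr_add[symmetric])
  ultimately show ?thesis using Lim_transform_eventually by fastforce
qed

lemma acoef_bounded:
  assumes "\<alpha> > -1"
  obtains M where "M > 0" "\<And>k. \<bar>acoef \<alpha> k\<bar> \<le> M"
proof -
  have "Bseq (acoef \<alpha>)"
    using acoef_tendsto_zero[OF assms] by (intro convergent_imp_Bseq) (auto simp: convergent_def)
  then obtain K where "K > 0" "\<forall>n. norm (acoef \<alpha> n) \<le> K" unfolding Bseq_def by blast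
  thus ?thesis using that[of K] by simp
qed

lemma
  assumes "real m > \<alpha>" "\<alpha> \<ge> -1"
  shows abs_acoef_Suc_le: "\<bar>acoef \<alpha> (Suc m)\<bar> \<le> \<bar>acoef \<alpha> m\<bar>"
    and sgn_acoef_Suc: "sgn (acoef \<alpha> (Suc m)) = sgn (acoef \<alpha> m)"
proof -
  have q: "0 < (real m - \<alpha>) / (real m + 1)" "(real m - \<alpha>) / (real m + 1) \<le> 1"
    using assms by (auto simp: field_simps)
  have "\<bar>acoef \<alpha> (Suc m)\<bar> = \<bar>acoef \<alpha> m\<bar> * ((real m - \<alpha>) / (real m + 1))"
    using q assms(1) by (simp add: acoef_Suc abs_mult)
  also have "\<dots> \<le> \<bar>acoef \<alpha> m\<bar>" by (rule mult_left_le) (use q in auto)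
  finally show "\<bar>acoef \<alpha> (Suc m)\<bar> \<le> \<bar>acoef \<alpha> m\<bar>" .
  show "sgn (acoef \<alpha> (Suc m)) = sgn (acoef \<alpha> m)"
    using q assms(1) by (simp add: acoef_Suc sgn_mult)
qed

lemma sgn_acoef_eq:
  fixes \<alpha> :: real
  assumes "real N > \<alpha>" "\<alpha> \<ge> -1" "N \<le> m"
  shows "sgn (acoef \<alpha> m) = sgn (acoef \<alpha> N)"
  using assms(3)
proof (induction m rule: dec_induct)
  case (step m)
  then show ?case using sgn_acoef_Suc[of \<alpha> m] assms(1,2) by simp
qed simp

text \<open>Beyond \<open>\<alpha>\<close> the terms \<open>\<alpha> gchoose k\<close> alternate in sign and decrease to 0 in modulus.\<close>

lemma summable_gbinomial:
  fixes \<alpha> :: real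
  assumes "\<alpha> > -1"
  shows "summable (\<lambda>k. \<alpha> gchoose k)"
proof -
  obtain N :: nat where N: "real N > \<alpha>" using reals_Archimedean2 by blast
  define \<sigma> where "\<sigma> = sgn (acoef \<alpha> N)"
  define c where "c = (\<lambda>k. \<bar>acoef \<alpha> (k + N)\<bar>)"
  have "c \<longlonglongrightarrow> 0" unfolding c_def
    using tendsto_rabs[OF LIMSEQ_ignore_initial_segment[OF acoef_tendsto_zero[OF assms], of N]]
    by simp
  moreover have "c (Suc k) \<le> c k" for k
    unfolding c_def using abs_acoef_Suc_le[of \<alpha> "k + N"] N assms by simp
  ultimately have "summable (\<lambda>k. (-1)^k * c k)"
    by (intro summable_Leibniz'(1)) (auto simp: c_def)
  hence "summable (\<lambda>k. ((-1)^N * \<sigma>) * ((-1)^k * c k))" by (rule summable_mult)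
  moreover have "((-1)^N * \<sigma>) * ((-1)^k * c k) = \<alpha> gchoose (k + N)" for k
  proof -
    have "sgn (acoef \<alpha> (k + N)) = \<sigma>" unfolding \<sigma>_def by (rule sgn_acoef_eq) (use N assms in auto)
    hence "acoef \<alpha> (k + N) = \<sigma> * c k" unfolding c_def by (metis abs_mult_sgn mult.commute)
    thus ?thesis by (simp add: gbinomial_eq_acoef power_add)
  qed
  ultimately show ?thesis by simp
qed

lemma eventually_at_left_1_unit_interval:
  "eventually (\<lambda>R::real. 0 < R \<and> R < 1) (at_left 1)"
  using eventually_at_left_real[where a="1::real" and b=0] by simp

text \<open>Abel's theorem for the binomial series \<open>(1 + R) powr \<alpha>\<close>, via summation by parts against \<open>R^j\<close>.\<close>

lemma gbinomial_sums_two_powr: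
  fixes \<alpha> :: real
  assumes "\<alpha> > -1"
  shows "(\<lambda>k. \<alpha> gchoose k) sums (2 powr \<alpha>)"
proof -
  obtain S where S: "(\<lambda>k. \<alpha> gchoose k) sums S"
    using summable_gbinomial[OF assms] by (auto simp: summable_def)
  define E where "E = (\<lambda>j. (\<Sum>i<Suc j. \<alpha> gchoose i) - S)"
  have E0: "E \<longlonglongrightarrow> 0" unfolding E_def
    using LIMSEQ_Suc[OF S[unfolded sums_def]] by (simp add: LIM_zero)
  have eq: "eventually (\<lambda>R. S * 1 + (\<Sum>j. E j * (R^j - R^(Suc j))) = (1 + R) powr \<alpha>) (at_left 1)"
    using eventually_at_left_1_unit_interval
  proof eventually_elim
    case (elim R)
    have "(\<lambda>j. (\<alpha> gchoose j) * R^j) sums (1 + R) powr \<alpha>"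
      using gen_binomial_real[of R \<alpha>] elim by simp
    moreover have "(\<lambda>j. (\<alpha> gchoose j) * R^j) sums (S * R^0 + (\<Sum>j. E j * (R^j - R^(Suc j))))"
      unfolding E_def
      by (rule sums_abel_summation[OF S])
        (use elim in \<open>auto simp: mult_left_le_one_le intro!: LIMSEQ_power_zero\<close>)
    ultimately show ?case by (simp add: sums_iff)
  qed
  have "((\<lambda>R. \<Sum>j. E j * (R^j - R^(Suc j))) \<longlongrightarrow> (\<Sum>j. E j * (1^j - 1^(Suc j)))) (at_left (1::real))"
  proof (rule tendsto_suminf_mult_decseq_diff[OF E0, where M=1])
    show "\<forall>\<^sub>F t in at_left 1. (\<forall>j. 0 \<le> t ^ j \<and> t ^ Suc j \<le> t ^ j) \<and> t ^ 0 \<le> (1::real)"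
      using eventually_at_left_1_unit_interval
      by eventually_elim (auto simp: mult_left_le_one_le)
  qed (auto intro!: tendsto_eq_intros)
  hence "((\<lambda>R. (1 + R) powr \<alpha>) \<longlongrightarrow> S) (at_left (1::real))"
    using Lim_transform_eventually[OF _ eq] by (fastforce intro: tendsto_add)
  moreover have "((\<lambda>R. (1 + R) powr \<alpha>) \<longlongrightarrow> (1 + 1) powr \<alpha>) (at_left (1::real))"
    by (intro tendsto_intros) auto
  ultimately have "S = 2 powr \<alpha>" using tendsto_unique[OF trivial_limit_at_left_real] by force
  thus ?thesis using S by simp
qed

definition binom_sum_error :: "real \<Rightarrow> nat \<Rightarrow> real" where
  "binom_sum_error \<alpha> j = (\<Sum>i<Suc j. \<alpha> gchoose i) - 2 powr \<alpha>"

lemma binom_sum_error_tendsto_zero: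
  fixes \<alpha> :: real
  assumes "\<alpha> > -1"
  shows "binom_sum_error \<alpha> \<longlonglongrightarrow> 0"
  unfolding binom_sum_error_def
  using LIMSEQ_Suc[OF gbinomial_sums_two_powr[OF assms, unfolded sums_def]] by (simp add: LIM_zero)

section \<open>The correction factor rho\<close>

definition acoef_ratio :: "real \<Rightarrow> nat \<Rightarrow> nat \<Rightarrow> real" where
  "acoef_ratio \<alpha> n j = acoef \<alpha> (n + j) / acoef \<alpha> n"

text \<open>Summation by parts turns \<open>\<Sum>\<^sub>j (\<alpha> gchoose j) acoef_ratio \<alpha> n j\<close> into the following series.\<close>

definition rho :: "real \<Rightarrow> nat \<Rightarrow> real" where
  "rho \<alpha> n = 2 powr \<alpha> + (\<Sum>j. binom_sum_error \<alpha> j * (acoef_ratio \<alpha> n j - acoef_ratio \<alpha> n (Suc j)))"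

lemma acoef_ratio_0: "\<alpha> \<notin> \<int> \<Longrightarrow> acoef_ratio \<alpha> n 0 = 1"
  using acoef_nonzero[of \<alpha> n] by (simp add: acoef_ratio_def)

lemma acoef_ratio_Suc:
  "acoef_ratio \<alpha> n (Suc j) = acoef_ratio \<alpha> n j * ((real (n + j) - \<alpha>) / (real (n + j) + 1))"
  by (simp add: acoef_ratio_def acoef_Suc)

lemma
  assumes "\<alpha> > -1" "\<alpha> \<notin> \<int>" "real n > \<alpha>"
  shows acoef_ratio_nonneg: "0 \<le> acoef_ratio \<alpha> n j"
    and acoef_ratio_Suc_le: "acoef_ratio \<alpha> n (Suc j) \<le> acoef_ratio \<alpha> n j"
proof -
  have q: "0 < (real (n + j) - \<alpha>) / (real (n + j) + 1)" "(real (n + j) - \<alpha>) / (real (n + j) + 1) \<le> 1"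
    for j using assms(1,3) by (auto simp: field_simps)
  have nonneg: "0 \<le> acoef_ratio \<alpha> n j" for j
  proof (induction j)
    case 0 thus ?case using acoef_ratio_0[OF assms(2)] by simp
  next
    case (Suc j) thus ?case unfolding acoef_ratio_Suc by (rule mult_nonneg_nonneg[OF _ less_imp_le[OF q(1)]])
  qed
  show "0 \<le> acoef_ratio \<alpha> n j" by (rule nonneg)
  show "acoef_ratio \<alpha> n (Suc j) \<le> acoef_ratio \<alpha> n j"
    unfolding acoef_ratio_Suc by (rule mult_left_le) (use q[of j] nonneg[of j] in auto)
qed

lemma acoef_ratio_tendsto_zero:
  assumes "\<alpha> > -1"
  shows "acoef_ratio \<alpha> n \<longlonglongrightarrow> 0"
proof -
  have "(\<lambda>j. acoef \<alpha> (j + n) / acoef \<alpha> n) \<longlonglongrightarrow> 0"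
    by (rule tendsto_divide_zero[OF LIMSEQ_ignore_initial_segment[OF acoef_tendsto_zero[OF assms]]])
  thus ?thesis by (simp add: acoef_ratio_def[abs_def] add.commute)
qed

lemma tendsto_acoef_ratio_one:
  assumes "\<alpha> \<notin> \<int>"
  shows "(\<lambda>n. acoef_ratio \<alpha> n j) \<longlonglongrightarrow> 1"
proof (induction j)
  case 0 thus ?case using acoef_ratio_0[OF assms] by simp
next
  case (Suc j)
  have "(\<lambda>n. (real n + real j - \<alpha>) / (real n + real j + 1)) \<longlonglongrightarrow> 1" by real_asymp
  with Suc have "(\<lambda>n. acoef_ratio \<alpha> n j * ((real (n + j) - \<alpha>) / (real (n + j) + 1))) \<longlonglongrightarrow> 1 * 1"
    by (intro tendsto_mult) simp_all
  thus ?case by (simp add: acoef_ratio_Suc)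
qed

lemma eventually_gt_real_sequentially: "eventually (\<lambda>n. real n > (c::real)) sequentially"
  using filterlim_real_sequentially by (simp add: filterlim_at_top_dense)

lemma tendsto_rho:
  assumes "\<alpha> > -1" "\<alpha> \<notin> \<int>"
  shows "rho \<alpha> \<longlonglongrightarrow> 2 powr \<alpha>"
proof -
  have "(\<lambda>n. \<Sum>j. binom_sum_error \<alpha> j * (acoef_ratio \<alpha> n j - acoef_ratio \<alpha> n (Suc j)))
          \<longlonglongrightarrow> (\<Sum>j. binom_sum_error \<alpha> j * (1 - 1))"
  proof (rule tendsto_suminf_mult_decseq_diff[OF binom_sum_error_tendsto_zero[OF assms(1)],
                                              where M=1 and W="\<lambda>_. 1"])
    show "\<forall>\<^sub>F n in sequentially. (\<forall>j. 0 \<le> acoef_ratio \<alpha> n j \<and> acoef_ratio \<alpha> n (Suc j) \<le> acoef_ratio \<alpha> n j)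
            \<and> acoef_ratio \<alpha> n 0 \<le> 1"
      using eventually_gt_real_sequentially[of \<alpha>]
      by eventually_elim
        (use acoef_ratio_nonneg acoef_ratio_Suc_le acoef_ratio_0 assms in auto)
  qed (use tendsto_acoef_ratio_one[OF assms(2)] in auto)
  hence "(\<lambda>n. 2 powr \<alpha> + (\<Sum>j. binom_sum_error \<alpha> j * (acoef_ratio \<alpha> n j - acoef_ratio \<alpha> n (Suc j))))
           \<longlonglongrightarrow> 2 powr \<alpha> + 0"
    by (intro tendsto_add tendsto_const) simp
  thus ?thesis by (simp add: rho_def[abs_def])
qed

lemma acoef_rho_asymp:
  assumes "\<alpha> > -1" "\<alpha> \<notin> \<int>"
  shows "(\<lambda>n. acoef \<alpha> n * rho \<alpha> n - 2 powr \<alpha> / Gamma (-\<alpha>) * real n powr (-\<alpha> - 1))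
           \<in> o(\<lambda>n. real n powr (-\<alpha> - 1))"
proof (rule smalloI_tendsto)
  define K where "K = 2 powr \<alpha> / Gamma (-\<alpha>)"
  have "(\<lambda>n. acoef \<alpha> n * real n powr (\<alpha> + 1) * rho \<alpha> n - K) \<longlonglongrightarrow> rGamma (-\<alpha>) * 2 powr \<alpha> - K"
    by (intro tendsto_intros tendsto_acoef_mult_powr tendsto_rho[OF assms])
  moreover have "rGamma (-\<alpha>) * 2 powr \<alpha> - K = 0"
    by (simp add: K_def rGamma_inverse_Gamma field_simps)
  moreover have "eventually (\<lambda>n. acoef \<alpha> n * real n powr (\<alpha> + 1) * rho \<alpha> n - K
      = (acoef \<alpha> n * rho \<alpha> n - K * real n powr (-\<alpha> - 1)) / real n powr (-\<alpha> - 1)) sequentially"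
    using eventually_gt_at_top[of 0]
    by eventually_elim (simp add: field_simps powr_minus[symmetric] powr_add[symmetric])
  ultimately show "((\<lambda>n. (acoef \<alpha> n * rho \<alpha> n - K * real n powr (-\<alpha> - 1)) / real n powr (-\<alpha> - 1))
                     \<longlongrightarrow> 0) sequentially"
    using Lim_transform_eventually by fastforce
qed (use eventually_gt_at_top[of 0] in \<open>auto elim: eventually_mono\<close>)

section \<open>The Fourier coefficients of phiR\<close>

definition phiR_coeff :: "real \<Rightarrow> real \<Rightarrow> nat \<Rightarrow> real" where
  "phiR_coeff \<alpha> R n = (\<Sum>j. (\<alpha> gchoose j) * acoef \<alpha> (n + j) * R ^ (n + 2 * j))"

lemma summable_phiR_coeff:
  assumes "\<alpha> > -1" "0 \<le> R" "R < 1"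
  shows "summable (\<lambda>j. (\<alpha> gchoose j) * acoef \<alpha> (n + j) * R ^ (n + 2 * j))"
proof -
  obtain M where M: "M > 0" "\<And>k. \<bar>acoef \<alpha> k\<bar> \<le> M" using acoef_bounded[OF assms(1)] by blast
  have g: "summable (\<lambda>j. (M * M) * R^j)" using assms by (intro summable_mult summable_geometric) simp
  have "norm ((\<alpha> gchoose j) * acoef \<alpha> (n + j) * R ^ (n + 2 * j)) \<le> (M * M) * R^j" for j
  proof -
    have "R ^ (n + 2 * j) \<le> R ^ j" by (rule power_decreasing) (use assms in auto)
    moreover have "\<bar>(\<alpha> gchoose j) * acoef \<alpha> (n + j)\<bar> \<le> M * M"
      using M by (auto simp: abs_mult gbinomial_eq_acoef intro!: mult_mono)
    ultimately show ?thesis using assms(2) by (auto simp: abs_mult intro!: mult_mono)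
  qed
  thus ?thesis by (intro summable_comparison_test'[OF g, where N=0]) auto
qed

lemma sums_phiR_coeff:
  assumes "\<alpha> > -1" "0 \<le> R" "R < 1"
  shows "(\<lambda>j. (\<alpha> gchoose j) * acoef \<alpha> (n + j) * R ^ (n + 2 * j)) sums phiR_coeff \<alpha> R n"
  unfolding phiR_coeff_def by (rule summable_sums[OF summable_phiR_coeff[OF assms]])

lemma phiR_coeff_sums_abel_form:
  assumes "\<alpha> > -1" "\<alpha> \<notin> \<int>" "real n > \<alpha>" "0 \<le> R" "R < 1"
  shows "(\<lambda>j. (\<alpha> gchoose j) * acoef \<alpha> (n + j) * R ^ (n + 2 * j)) sums
           (acoef \<alpha> n * R ^ n * (2 powr \<alpha> + (\<Sum>j. binom_sum_error \<alpha> j *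
              (acoef_ratio \<alpha> n j * (R*R)^j - acoef_ratio \<alpha> n (Suc j) * (R*R)^(Suc j)))))"
proof -
  define w where "w = (\<lambda>j. acoef_ratio \<alpha> n j * (R*R)^j)"
  have RR: "0 \<le> R * R" "R * R < 1" using assms(4,5) mult_left_le_one_le[of R R] by auto
  have "(\<lambda>j. (\<alpha> gchoose j) * w j) sums
          (2 powr \<alpha> * w 0 + (\<Sum>j. ((\<Sum>i<Suc j. \<alpha> gchoose i) - 2 powr \<alpha>) * (w j - w (Suc j))))"
  proof (rule sums_abel_summation[OF gbinomial_sums_two_powr[OF assms(1)]])
    show "0 \<le> w j" for j unfolding w_def using acoef_ratio_nonneg[OF assms(1-3)] RR by simp
    show "w (Suc j) \<le> w j" for j unfolding w_def
      using acoef_ratio_nonneg[OF assms(1-3)] acoef_ratio_Suc_le[OF assms(1-3), of j] RR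
      by (auto intro!: mult_mono simp: mult_left_le_one_le)
    show "w \<longlonglongrightarrow> 0" unfolding w_def
      using tendsto_mult[OF acoef_ratio_tendsto_zero[OF assms(1)] LIMSEQ_power_zero[of "R*R"]] RR
      by simp
  qed
  hence "(\<lambda>j. (acoef \<alpha> n * R ^ n) * ((\<alpha> gchoose j) * w j)) sums
           ((acoef \<alpha> n * R ^ n) * (2 powr \<alpha> + (\<Sum>j. binom_sum_error \<alpha> j * (w j - w (Suc j)))))"
    using acoef_ratio_0[OF assms(2)] by (intro sums_mult) (simp add: w_def binom_sum_error_def)
  moreover have "(acoef \<alpha> n * R ^ n) * ((\<alpha> gchoose j) * w j) = (\<alpha> gchoose j) * acoef \<alpha> (n + j) * R ^ (n + 2 * j)" for j
    using acoef_nonzero[OF assms(2), of n]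
    by (simp add: w_def acoef_ratio_def power_add power_mult power2_eq_square)
  ultimately show ?thesis unfolding w_def by simp
qed

lemma tendsto_phiR_coeff:
  assumes "\<alpha> > -1" "\<alpha> \<notin> \<int>" "real n > \<alpha>"
  shows "((\<lambda>R. phiR_coeff \<alpha> R n) \<longlongrightarrow> acoef \<alpha> n * rho \<alpha> n) (at_left 1)"
proof -
  have "((\<lambda>R. \<Sum>j. binom_sum_error \<alpha> j * (acoef_ratio \<alpha> n j * (R*R)^j - acoef_ratio \<alpha> n (Suc j) * (R*R)^(Suc j)))
         \<longlongrightarrow> (\<Sum>j. binom_sum_error \<alpha> j * (acoef_ratio \<alpha> n j - acoef_ratio \<alpha> n (Suc j)))) (at_left 1)"
  proof (rule tendsto_suminf_mult_decseq_diff[OF binom_sum_error_tendsto_zero[OF assms(1)],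
                                              where M=1 and W="acoef_ratio \<alpha> n"])
    show "\<forall>\<^sub>F R in at_left 1. (\<forall>j. 0 \<le> acoef_ratio \<alpha> n j * (R*R)^j
              \<and> acoef_ratio \<alpha> n (Suc j) * (R*R)^(Suc j) \<le> acoef_ratio \<alpha> n j * (R*R)^j)
            \<and> acoef_ratio \<alpha> n 0 * (R*R)^0 \<le> (1::real)"
      using eventually_at_left_1_unit_interval
    proof eventually_elim
      case (elim R)
      hence "0 \<le> R * R" "R * R \<le> 1" by (auto simp: mult_le_one)
      thus ?case
        using acoef_ratio_nonneg[OF assms] acoef_ratio_Suc_le[OF assms] acoef_ratio_0[OF assms(2)]
        by (auto intro!: mult_mono simp: mult_left_le_one_le)
    qed
  qed (auto intro!: tendsto_eq_intros acoef_ratio_nonneg[OF assms] acoef_ratio_Suc_le[OF assms]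
         simp: acoef_ratio_0[OF assms(2)])
  hence "((\<lambda>R. acoef \<alpha> n * R ^ n * (2 powr \<alpha> + (\<Sum>j. binom_sum_error \<alpha> j *
              (acoef_ratio \<alpha> n j * (R*R)^j - acoef_ratio \<alpha> n (Suc j) * (R*R)^(Suc j)))))
          \<longlongrightarrow> acoef \<alpha> n * 1 ^ n * rho \<alpha> n) (at_left 1)"
    unfolding rho_def by (intro tendsto_intros)
  moreover have "eventually (\<lambda>R. acoef \<alpha> n * R ^ n * (2 powr \<alpha> + (\<Sum>j. binom_sum_error \<alpha> j *
              (acoef_ratio \<alpha> n j * (R*R)^j - acoef_ratio \<alpha> n (Suc j) * (R*R)^(Suc j))))
          = phiR_coeff \<alpha> R n) (at_left 1)"
    using eventually_at_left_1_unit_interval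
    by eventually_elim (use phiR_coeff_sums_abel_form[OF assms] in \<open>auto simp: sums_iff phiR_coeff_def\<close>)
  ultimately show ?thesis using Lim_transform_eventually by fastforce
qed

lemma integral_cis_int:
  fixes m :: int
  shows "integral {-pi..pi} (\<lambda>\<theta>. cis (of_int m * \<theta>)) = (if m = 0 then of_real (2 * pi) else 0)"
proof -
  have "((\<lambda>\<theta>. of_real (cos (of_int m * \<theta>)) + \<i> * of_real (sin (of_int m * \<theta>)) :: complex) has_integral
          (of_real (if m = 0 then 2 * pi else 0) + \<i> * of_real 0)) {-pi..pi}"
    by (intro has_integral_add has_integral_mult_right has_integral_of_real
          has_integral_cos_nx has_integral_sin_nx)
  moreover have "(\<lambda>\<theta>. of_real (cos (of_int m * \<theta>)) + \<i> * of_real (sin (of_int m * \<theta>)) :: complex)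
                   = (\<lambda>\<theta>. cis (of_int m * \<theta>))"
    by (rule ext) (simp add: complex_eq_iff)
  ultimately show ?thesis by (simp add: integral_unique split: if_splits)
qed

text \<open>The partial sums converge uniformly by the Weierstrass M-test.\<close>

lemma sums_integral_mult_cis_series:
  fixes c :: "nat \<Rightarrow> complex" and h :: "real \<Rightarrow> complex" and s :: real
  assumes c: "summable (\<lambda>k. norm (c k))" and h: "continuous_on {-pi..pi} h"
  shows "(\<lambda>k. c k * integral {-pi..pi} (\<lambda>\<theta>. h \<theta> * cis (real k * s * \<theta>))) sums
           integral {-pi..pi} (\<lambda>\<theta>. h \<theta> * (\<Sum>k. c k * cis (real k * s * \<theta>)))"
proof -
  let ?u = "\<lambda>\<theta>. \<Sum>k. c k * cis (real k * s * \<theta>)"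
  have u: "uniform_limit {-pi..pi} (\<lambda>N \<theta>. \<Sum>k<N. c k * cis (real k * s * \<theta>)) ?u sequentially"
    by (rule Weierstrass_m_test[OF _ c]) (simp add: norm_mult)
  have hb: "bounded (h ` {-pi..pi})" by (intro compact_imp_bounded compact_continuous_image h) simp
  have "norm (?u \<theta>) \<le> (\<Sum>k. norm (c k))" for \<theta>
  proof -
    have "summable (\<lambda>k. norm (c k * cis (real k * s * \<theta>)))" using c by (simp add: norm_mult)
    hence "norm (?u \<theta>) \<le> (\<Sum>k. norm (c k * cis (real k * s * \<theta>)))" by (rule summable_norm)
    thus ?thesis by (simp add: norm_mult)
  qed
  hence ub: "bounded (?u ` {-pi..pi})" unfolding bounded_iff by blast
  obtain I J where I: "\<And>N. ((\<lambda>\<theta>. h \<theta> * (\<Sum>k<N. c k * cis (real k * s * \<theta>))) has_integral I N) {-pi..pi}"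
    and J: "((\<lambda>\<theta>. h \<theta> * ?u \<theta>) has_integral J) {-pi..pi}"
    and IJ: "I \<longlonglongrightarrow> J"
    by (rule uniform_limit_integral[OF uniform_lim_mult[OF uniform_limit_const u hb ub]])
      (auto intro!: continuous_intros h)
  have int_k: "(\<lambda>\<theta>. h \<theta> * cis (real k * s * \<theta>)) integrable_on {-pi..pi}" for k
    by (intro integrable_continuous_interval continuous_intros h)
  have "I = (\<lambda>N. \<Sum>k<N. c k * integral {-pi..pi} (\<lambda>\<theta>. h \<theta> * cis (real k * s * \<theta>)))"
  proof
    fix N
    have "I N = integral {-pi..pi} (\<lambda>\<theta>. \<Sum>k<N. c k * (h \<theta> * cis (real k * s * \<theta>)))"
      using I[of N] by (simp add: integral_unique sum_distrib_left mult_ac)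
    also have "\<dots> = (\<Sum>k<N. c k * integral {-pi..pi} (\<lambda>\<theta>. h \<theta> * cis (real k * s * \<theta>)))"
      by (subst integral_sum) (auto intro: integrable_on_mult_right int_k)
    finally show "I N = (\<Sum>k<N. c k * integral {-pi..pi} (\<lambda>\<theta>. h \<theta> * cis (real k * s * \<theta>)))" .
  qed
  with IJ J show ?thesis by (simp add: sums_def integral_unique)
qed

lemma Re_binomial_base_pos:
  assumes "0 \<le> R" "R < 1"
  shows "Re (1 - of_real R * cis \<theta>) > 0" "Re (1 + of_real R * cis (-\<theta>)) > 0"
proof -
  have "\<bar>R * cos \<theta>\<bar> \<le> R" using assms(1) by (simp add: abs_mult mult_left_le)
  thus "Re (1 - of_real R * cis \<theta>) > 0" "Re (1 + of_real R * cis (-\<theta>)) > 0" using assms by auto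
qed

lemma continuous_on_one_minus_cis_powr:
  assumes "0 \<le> R" "R < 1"
  shows "continuous_on S (\<lambda>\<theta>. (1 - of_real R * cis \<theta>) powr complex_of_real \<alpha>)"
proof (intro continuous_on_powr_complex continuous_intros)
  show "S \<subseteq> {z. 0 \<le> Re (1 - complex_of_real R * cis z) \<or> Im (1 - complex_of_real R * cis z) \<noteq> 0}"
    using Re_binomial_base_pos(1)[OF assms] by (auto intro: less_imp_le)
  show "\<And>z. z \<in> S \<Longrightarrow> 1 - complex_of_real R * cis z = 0 \<Longrightarrow> 0 < Re (complex_of_real \<alpha>)"
    using Re_binomial_base_pos(1)[OF assms] by (metis less_irrefl zero_complex.sel(1))
qed

lemma continuous_on_one_plus_cis_powr:
  assumes "0 \<le> R" "R < 1"
  shows "continuous_on S (\<lambda>\<theta>. (1 + of_real R * cis (-\<theta>)) powr complex_of_real \<alpha>)"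
proof (intro continuous_on_powr_complex continuous_intros)
  show "S \<subseteq> {z. 0 \<le> Re (1 + complex_of_real R * cis (-z)) \<or> Im (1 + complex_of_real R * cis (-z)) \<noteq> 0}"
    using Re_binomial_base_pos(2)[OF assms] by (auto intro: less_imp_le)
  show "\<And>z. z \<in> S \<Longrightarrow> 1 + complex_of_real R * cis (-z) = 0 \<Longrightarrow> 0 < Re (complex_of_real \<alpha>)"
    using Re_binomial_base_pos(2)[OF assms] by (metis less_irrefl zero_complex.sel(1))
qed

lemma continuous_on_phiR:
  assumes "0 \<le> R" "R < 1"
  shows "continuous_on S (phiR \<alpha> R)"
  unfolding phiR_def[abs_def]
  by (intro continuous_on_mult continuous_on_one_minus_cis_powr continuous_on_one_plus_cis_powr assms)

lemma gbinomial_of_real: "(complex_of_real a gchoose n) = of_real (a gchoose n)"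
  by (simp add: gbinomial_prod_rev)

lemma one_minus_cis_powr_sums:
  assumes "0 \<le> R" "R < 1"
  shows "(\<lambda>k. complex_of_real (acoef \<alpha> k * R^k) * cis (real k * 1 * \<theta>)) sums
           (1 - of_real R * cis \<theta>) powr of_real \<alpha>"
proof -
  have "norm (- (of_real R * cis \<theta>)) < 1" using assms by (simp add: norm_mult)
  from gen_binomial_complex[OF this, of "of_real \<alpha>"]
  have "(\<lambda>k. (complex_of_real \<alpha> gchoose k) * (- (of_real R * cis \<theta>)) ^ k) sums (1 - of_real R * cis \<theta>) powr of_real \<alpha>"
    by simp
  moreover have "(complex_of_real \<alpha> gchoose k) * (- (of_real R * cis \<theta>)) ^ k
                   = complex_of_real (acoef \<alpha> k * R^k) * cis (real k * 1 * \<theta>)" for k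
  proof -
    have "(complex_of_real \<alpha> gchoose k) * (- (of_real R * cis \<theta>)) ^ k
        = ((-1)^k * (-1)^k) * (of_real (acoef \<alpha> k) * (of_real R ^ k * cis \<theta> ^ k))"
      unfolding gbinomial_of_real gbinomial_eq_acoef power_minus[of "of_real R * cis \<theta>" k]
        power_mult_distrib
      by (simp only: of_real_mult of_real_power of_real_minus of_real_1 mult_ac)
    thus ?thesis by (simp add: Complex.DeMoivre)
  qed
  ultimately show ?thesis by simp
qed

lemma one_plus_cis_powr_sums:
  assumes "0 \<le> R" "R < 1"
  shows "(\<lambda>k. complex_of_real ((\<alpha> gchoose k) * R^k) * cis (real k * (-1) * \<theta>)) sums
           (1 + of_real R * cis (-\<theta>)) powr of_real \<alpha>"
proof -
  have "norm (of_real R * cis (-\<theta>)) < 1" using assms by (simp add: norm_mult)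
  from gen_binomial_complex[OF this, of "of_real \<alpha>"]
  show ?thesis by (simp add: gbinomial_of_real power_mult_distrib Complex.DeMoivre mult.assoc)
qed

lemma summable_norm_binomial_coeffs:
  assumes "\<alpha> > -1" "0 \<le> R" "R < 1"
  shows "summable (\<lambda>k. norm (complex_of_real (acoef \<alpha> k * R^k)))"
        "summable (\<lambda>k. norm (complex_of_real ((\<alpha> gchoose k) * R^k)))"
proof -
  obtain M where M: "M > 0" "\<And>k. \<bar>acoef \<alpha> k\<bar> \<le> M" using acoef_bounded[OF assms(1)] by blast
  have g: "summable (\<lambda>k. M * R^k)" using assms by (intro summable_mult summable_geometric) simp
  have "\<bar>acoef \<alpha> k * R^k\<bar> \<le> M * R^k" "\<bar>(\<alpha> gchoose k) * R^k\<bar> \<le> M * R^k" for k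
    using M(2)[of k] assms(2) by (auto simp: abs_mult gbinomial_eq_acoef intro!: mult_right_mono)
  thus "summable (\<lambda>k. norm (complex_of_real (acoef \<alpha> k * R^k)))"
       "summable (\<lambda>k. norm (complex_of_real ((\<alpha> gchoose k) * R^k)))"
    unfolding norm_of_real by (auto intro!: summable_comparison_test'[OF g, where N=0])
qed

lemma integral_cis_mult_one_minus_cis_powr:
  assumes "\<alpha> > -1" "0 \<le> R" "R < 1"
  shows "integral {-pi..pi} (\<lambda>\<theta>. cis (of_int p * \<theta>) * (1 - of_real R * cis \<theta>) powr complex_of_real \<alpha>)
          = (if p \<le> 0 then of_real (acoef \<alpha> (nat (-p)) * R ^ nat (-p) * (2 * pi)) else 0)"
proof -
  define a where "a = (\<lambda>k. complex_of_real (acoef \<alpha> k * R^k))"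
  have "(1 - of_real R * cis \<theta>) powr complex_of_real \<alpha> = (\<Sum>k. a k * cis (real k * 1 * \<theta>))" for \<theta>
    using one_minus_cis_powr_sums[OF assms(2,3), of \<alpha> \<theta>] by (simp add: a_def sums_iff)
  moreover have "integral {-pi..pi} (\<lambda>\<theta>. cis (of_int p * \<theta>) * cis (real k * 1 * \<theta>))
                   = (if int k = - p then of_real (2 * pi) else 0)" for k
    using integral_cis_int[of "p + int k"] by (simp add: cis_mult algebra_simps)
  ultimately have "(\<lambda>k. a k * (if int k = - p then of_real (2 * pi) else 0)) sums
           integral {-pi..pi} (\<lambda>\<theta>. cis (of_int p * \<theta>) * (1 - of_real R * cis \<theta>) powr complex_of_real \<alpha>)"
    using sums_integral_mult_cis_series[of a "\<lambda>\<theta>. cis (of_int p * \<theta>)" 1]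
      summable_norm_binomial_coeffs(1)[OF assms]
    by (simp add: a_def continuous_intros)
  moreover have "(\<lambda>k. a k * (if int k = - p then of_real (2 * pi) else 0))
                   = (\<lambda>k. if k = nat (-p) \<and> p \<le> 0 then a (nat (-p)) * of_real (2 * pi) else 0)"
    by (intro ext) auto
  ultimately show ?thesis
    using sums_single[of "nat (-p)" "\<lambda>_. if p \<le> 0 then a (nat (-p)) * of_real (2 * pi) else 0"]
    by (cases "p \<le> 0") (auto simp: a_def sums_iff if_distrib cong: if_cong)
qed

lemma exp_int_eq_cis: "exp (- \<i> * of_int m * of_real \<theta>) = cis (of_int (- m) * \<theta>)"
  by (simp add: cis_conv_exp mult.assoc)

lemma integral_phiR_sums:
  assumes "\<alpha> > -1" "0 \<le> R" "R < 1"
  shows "(\<lambda>j. of_real (((\<alpha> gchoose j) * R^j) *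
            (if m + int j \<ge> 0 then acoef \<alpha> (nat (m + int j)) * R ^ nat (m + int j) * (2 * pi) else 0)))
         sums integral {-pi..pi} (\<lambda>\<theta>. phiR \<alpha> R \<theta> * exp (- \<i> * of_int m * of_real \<theta>))"
proof -
  define c where "c = (\<lambda>j. complex_of_real ((\<alpha> gchoose j) * R^j))"
  define h where "h = (\<lambda>\<theta>. (1 - of_real R * cis \<theta>) powr complex_of_real \<alpha> * cis (of_int (-m) * \<theta>))"
  have "(1 + of_real R * cis (-\<theta>)) powr complex_of_real \<alpha> = (\<Sum>k. c k * cis (real k * (-1) * \<theta>))" for \<theta>
    using one_plus_cis_powr_sums[OF assms(2,3), of \<alpha> \<theta>] by (simp add: c_def sums_iff)
  hence "(\<lambda>\<theta>. h \<theta> * (\<Sum>k. c k * cis (real k * (-1) * \<theta>)))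
           = (\<lambda>\<theta>. phiR \<alpha> R \<theta> * exp (- \<i> * of_int m * of_real \<theta>))"
    unfolding exp_int_eq_cis by (simp add: h_def phiR_def mult_ac)
  moreover have "integral {-pi..pi} (\<lambda>\<theta>. h \<theta> * cis (real j * (-1) * \<theta>))
      = of_real (if m + int j \<ge> 0 then acoef \<alpha> (nat (m + int j)) * R ^ nat (m + int j) * (2 * pi) else 0)" for j
  proof -
    have "(\<lambda>\<theta>. h \<theta> * cis (real j * (-1) * \<theta>))
            = (\<lambda>\<theta>. cis (of_int (- (m + int j)) * \<theta>) * (1 - of_real R * cis \<theta>) powr complex_of_real \<alpha>)"
      by (rule ext) (simp add: h_def mult_ac cis_mult algebra_simps)
    thus ?thesis using integral_cis_mult_one_minus_cis_powr[OF assms, of "- (m + int j)"]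
      by (simp add: add.commute)
  qed
  moreover have "continuous_on {-pi..pi} h"
    unfolding h_def by (intro continuous_on_mult continuous_on_one_minus_cis_powr assms continuous_intros)
  ultimately show ?thesis
    using sums_integral_mult_cis_series[of c h "-1"] summable_norm_binomial_coeffs(2)[OF assms]
    by (simp add: c_def)
qed

lemma power_add_twice: "(R::real) ^ (n + 2 * j) = R^n * (R^j * R^j)"
  by (simp add: power_add power_mult power2_eq_square power_mult_distrib)

lemma fourier_coeff_phiR_nat:
  assumes "\<alpha> > -1" "0 \<le> R" "R < 1"
  shows "fourier_coeff (phiR \<alpha> R) (int n) = of_real (phiR_coeff \<alpha> R n)"
proof -
  have term_eq: "((\<alpha> gchoose j) * R^j) * (if int n + int j \<ge> 0
            then acoef \<alpha> (nat (int n + int j)) * R ^ nat (int n + int j) * (2 * pi) else 0)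
          = (\<alpha> gchoose j) * acoef \<alpha> (n + j) * R ^ (n + 2 * j) * (2 * pi)" for j
    unfolding power_add_twice by (simp add: nat_add_distrib power_add mult_ac)
  have "(\<lambda>j. of_real ((\<alpha> gchoose j) * acoef \<alpha> (n + j) * R ^ (n + 2 * j) * (2 * pi)))
          sums integral {-pi..pi} (\<lambda>\<theta>. phiR \<alpha> R \<theta> * exp (- \<i> * of_int (int n) * of_real \<theta>))"
    using integral_phiR_sums[OF assms, of "int n"] unfolding term_eq .
  with sums_of_real[OF sums_mult2[OF sums_phiR_coeff[OF assms]], where 'a=complex]
  have "integral {-pi..pi} (\<lambda>\<theta>. phiR \<alpha> R \<theta> * exp (- \<i> * of_int (int n) * of_real \<theta>))
          = of_real (phiR_coeff \<alpha> R n * (2 * pi))"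
    using sums_unique2 by blast
  thus ?thesis by (simp add: fourier_coeff_def)
qed

text \<open>Only the terms with \<open>j \<ge> n\<close> survive for the coefficient of index \<open>-n\<close>; after the shift
  \<open>j \<mapsto> n + j\<close> the factor \<open>(-1)^n\<close> comes from \<open>\<alpha> gchoose (n + j)\<close> against \<open>acoef \<alpha> j\<close>.\<close>

lemma fourier_coeff_phiR_neg_nat:
  assumes "\<alpha> > -1" "0 \<le> R" "R < 1"
  shows "fourier_coeff (phiR \<alpha> R) (- int n) = (-1)^n * of_real (phiR_coeff \<alpha> R n)"
proof -
  have shifted: "(\<lambda>j. of_real (((\<alpha> gchoose (j + n)) * R^(j + n)) * (if - int n + int (j + n) \<ge> 0
            then acoef \<alpha> (nat (- int n + int (j + n))) * R ^ nat (- int n + int (j + n)) * (2 * pi) else 0)))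
          sums integral {-pi..pi} (\<lambda>\<theta>. phiR \<alpha> R \<theta> * exp (- \<i> * of_int (- int n) * of_real \<theta>))"
    by (rule iffD2[OF sums_zero_iff_shift[of n]]) (use integral_phiR_sums[OF assms, of "- int n"] in auto)
  have term_eq: "((\<alpha> gchoose (j + n)) * R^(j + n)) * (if - int n + int (j + n) \<ge> 0
            then acoef \<alpha> (nat (- int n + int (j + n))) * R ^ nat (- int n + int (j + n)) * (2 * pi) else 0)
          = (-1)^n * ((\<alpha> gchoose j) * acoef \<alpha> (n + j) * R ^ (n + 2 * j) * (2 * pi))" for j
    unfolding power_add_twice by (simp add: gbinomial_eq_acoef power_add mult_ac add.commute)
  have "(\<lambda>j. of_real ((-1)^n * ((\<alpha> gchoose j) * acoef \<alpha> (n + j) * R ^ (n + 2 * j) * (2 * pi))))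
          sums integral {-pi..pi} (\<lambda>\<theta>. phiR \<alpha> R \<theta> * exp (- \<i> * of_int (- int n) * of_real \<theta>))"
    using shifted unfolding term_eq .
  with sums_of_real[OF sums_mult[OF sums_mult2[OF sums_phiR_coeff[OF assms]], of "(-1)^n"], where 'a=complex]
  have "integral {-pi..pi} (\<lambda>\<theta>. phiR \<alpha> R \<theta> * exp (- \<i> * of_int (- int n) * of_real \<theta>))
          = of_real ((-1)^n * (phiR_coeff \<alpha> R n * (2 * pi)))"
    using sums_unique2 by blast
  thus ?thesis by (simp add: fourier_coeff_def)
qed

section \<open>Passage to the limit \<open>R \<rightarrow> 1\<close>\<close>

lemma sin_ge_half:
  assumes "0 \<le> x" "x \<le> pi / 2"
  shows "x / 2 \<le> sin x"
proof -
  have "\<bar>sin x - (\<Sum>m<3. sin_coeff m * x ^ m)\<bar> \<le> inverse (fact 3) * \<bar>x\<bar> ^ 3"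
    by (rule Maclaurin_sin_bound)
  moreover have "(\<Sum>m<3. sin_coeff m * x ^ m) = x"
    by (simp add: sin_coeff_def eval_nat_numeral)
  moreover have "inverse (fact 3) * \<bar>x\<bar> ^ 3 = x^3 / 6"
    using assms(1) by (simp add: fact_numeral inverse_eq_divide)
  ultimately have Taylor: "x - x^3 / 6 \<le> sin x" unfolding abs_le_iff by linarith
  have "pi / 2 \<le> 8 / 5" using pi_approx(2) by simp
  hence "x * x \<le> (8/5) * (8/5)" using assms by (intro mult_mono) auto
  hence "x * (x * x) \<le> x * 3" using assms(1) by (intro mult_left_mono) auto
  hence "x^3 / 6 \<le> x / 2" by (simp add: power3_eq_cube)
  with Taylor show ?thesis by simp
qed

lemma abs_sin_ge_half:
  assumes "\<bar>x\<bar> \<le> pi / 2"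
  shows "\<bar>x\<bar> / 2 \<le> \<bar>sin x\<bar>"
proof (cases "x \<ge> 0")
  case True thus ?thesis using sin_ge_half[of x] assms sin_ge_zero[of x] by simp
next
  case False thus ?thesis using sin_ge_half[of "-x"] assms sin_ge_zero[of "-x"] by simp
qed

lemma one_minus_cos_ge:
  assumes "\<bar>\<theta>\<bar> \<le> pi"
  shows "\<theta>^2 / 8 \<le> 1 - cos \<theta>"
proof -
  have c: "cos \<theta> = 1 - 2 * sin (\<theta>/2) ^ 2" using cos_double_sin[of "\<theta>/2"] by simp
  have "\<bar>\<theta>/2\<bar> / 2 \<le> \<bar>sin (\<theta>/2)\<bar>" by (rule abs_sin_ge_half) (use assms in simp)
  hence "(\<bar>\<theta>/2\<bar> / 2)^2 \<le> \<bar>sin (\<theta>/2)\<bar>^2" by (rule power_mono) simp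
  thus ?thesis unfolding c by (simp add: power_divide power2_abs)
qed

lemma one_plus_cos_ge:
  assumes "\<bar>\<theta>\<bar> \<le> pi"
  shows "(pi - \<bar>\<theta>\<bar>)^2 / 8 \<le> 1 + cos \<theta>"
proof -
  have "cos \<theta> = cos \<bar>\<theta>\<bar>" by (simp add: abs_if)
  also have "\<dots> = - cos (pi - \<bar>\<theta>\<bar>)" by (simp add: cos_diff)
  finally have "1 + cos \<theta> = 1 - cos (pi - \<bar>\<theta>\<bar>)" by simp
  moreover have "(pi - \<bar>\<theta>\<bar>)^2 / 8 \<le> 1 - cos (pi - \<bar>\<theta>\<bar>)" by (rule one_minus_cos_ge) (use assms in auto)
  ultimately show ?thesis by simp
qed

lemma
  fixes R \<theta> :: real
  shows norm_one_minus_cis_squared: "(cmod (1 - of_real R * cis \<theta>))^2 = (1 - R)^2 + 2 * R * (1 - cos \<theta>)"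
    and norm_one_plus_cis_squared: "(cmod (1 + of_real R * cis (-\<theta>)))^2 = (1 - R)^2 + 2 * R * (1 + cos \<theta>)"
proof -
  have s: "sin \<theta> ^ 2 = 1 - cos \<theta> ^ 2" by (rule sin_squared_eq)
  have "(cmod (1 - of_real R * cis \<theta>))^2 = (1 - R * cos \<theta>)^2 + (R * sin \<theta>)^2"
    by (simp add: cmod_power2)
  also have "\<dots> = (1 - R)^2 + 2 * R * (1 - cos \<theta>)"
    unfolding power_mult_distrib s by (simp add: power2_eq_square algebra_simps)
  finally show "(cmod (1 - of_real R * cis \<theta>))^2 = (1 - R)^2 + 2 * R * (1 - cos \<theta>)" .
  have "(cmod (1 + of_real R * cis (-\<theta>)))^2 = (1 + R * cos \<theta>)^2 + (R * sin \<theta>)^2"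
    by (simp add: cmod_power2)
  also have "\<dots> = (1 - R)^2 + 2 * R * (1 + cos \<theta>)"
    unfolding power_mult_distrib s by (simp add: power2_eq_square algebra_simps)
  finally show "(cmod (1 + of_real R * cis (-\<theta>)))^2 = (1 - R)^2 + 2 * R * (1 + cos \<theta>)" .
qed

lemma
  assumes "1/2 \<le> R" "\<bar>\<theta>\<bar> \<le> pi"
  shows norm_one_minus_cis_ge: "\<bar>\<theta>\<bar> / 3 \<le> cmod (1 - of_real R * cis \<theta>)"
    and norm_one_plus_cis_ge: "(pi - \<bar>\<theta>\<bar>) / 3 \<le> cmod (1 + of_real R * cis (-\<theta>))"
proof -
  have c: "0 \<le> 1 - cos \<theta>" "0 \<le> 1 + cos \<theta>" using cos_le_one[of \<theta>] cos_ge_minus_one[of \<theta>] by linarith+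
  have "(\<bar>\<theta>\<bar> / 3)^2 \<le> \<theta>^2 / 8" by (simp add: power_divide power2_abs)
  also have "\<dots> \<le> 1 - cos \<theta>" by (rule one_minus_cos_ge[OF assms(2)])
  also have "\<dots> \<le> 2 * R * (1 - cos \<theta>)" using mult_right_mono[of 1 "2*R" "1 - cos \<theta>"] assms c by simp
  also have "\<dots> \<le> (cmod (1 - of_real R * cis \<theta>))^2" unfolding norm_one_minus_cis_squared by simp
  finally show "\<bar>\<theta>\<bar> / 3 \<le> cmod (1 - of_real R * cis \<theta>)" by (rule power2_le_imp_le) simp
  have "((pi - \<bar>\<theta>\<bar>) / 3)^2 \<le> (pi - \<bar>\<theta>\<bar>)^2 / 8" by (simp add: power_divide)
  also have "\<dots> \<le> 1 + cos \<theta>" by (rule one_plus_cos_ge[OF assms(2)])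
  also have "\<dots> \<le> 2 * R * (1 + cos \<theta>)" using mult_right_mono[of 1 "2*R" "1 + cos \<theta>"] assms c by simp
  also have "\<dots> \<le> (cmod (1 + of_real R * cis (-\<theta>)))^2" unfolding norm_one_plus_cis_squared by simp
  finally show "(pi - \<bar>\<theta>\<bar>) / 3 \<le> cmod (1 + of_real R * cis (-\<theta>))" by (rule power2_le_imp_le) simp
qed

lemma
  assumes "0 \<le> R" "R \<le> 1"
  shows norm_one_minus_cis_le: "cmod (1 - of_real R * cis \<theta>) \<le> 2"
    and norm_one_plus_cis_le: "cmod (1 + of_real R * cis (-\<theta>)) \<le> 2"
  using norm_triangle_ineq4[of 1 "of_real R * cis \<theta>"] norm_triangle_ineq[of 1 "of_real R * cis (-\<theta>)"] assms
  by (simp_all add: norm_mult)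

lemma abs_powr_integrable_on:
  assumes "a > -1"
  shows "(\<lambda>\<theta>. \<bar>\<theta>\<bar> powr a) integrable_on {-pi..pi}"
proof (rule Henstock_Kurzweil_Integration.integrable_combine[where a="-pi" and c=0 and b=pi])
  have i: "(\<lambda>x. x powr a) integrable_on {0..pi}" by (rule integrable_on_powr_from_0) (use assms in auto)
  show "(\<lambda>\<theta>. \<bar>\<theta>\<bar> powr a) integrable_on {0..pi}"
    by (rule integrable_eq[OF i]) simp
  have "(\<lambda>x. (-x) powr a) integrable_on {-pi..0}"
    using iffD2[OF Henstock_Kurzweil_Integration.integrable_reflect_real i] by simp
  thus "(\<lambda>\<theta>. \<bar>\<theta>\<bar> powr a) integrable_on {-pi..0}"
    by (rule integrable_eq) simp_all
qed simp_all

lemma pi_minus_abs_powr_integrable_on: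
  assumes "a > -1"
  shows "(\<lambda>\<theta>. (pi - \<bar>\<theta>\<bar>) powr a) integrable_on {-pi..pi}"
proof (rule Henstock_Kurzweil_Integration.integrable_combine[where a="-pi" and c=0 and b=pi])
  have i: "(\<lambda>x. x powr a) integrable_on cbox 0 pi" using integrable_on_powr_from_0[of a pi] assms by simp
  from integrable_affinity[OF i, of "-1" pi]
  have "(\<lambda>x. (pi - x) powr a) integrable_on {0..pi}" by simp
  thus "(\<lambda>\<theta>. (pi - \<bar>\<theta>\<bar>) powr a) integrable_on {0..pi}"
    by (rule integrable_eq) simp
  from integrable_affinity[OF i, of 1 pi]
  have "(\<lambda>x. (x + pi) powr a) integrable_on {-pi..0}" by simp
  thus "(\<lambda>\<theta>. (pi - \<bar>\<theta>\<bar>) powr a) integrable_on {-pi..0}"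
    by (rule integrable_eq) (simp add: add.commute)
qed simp_all

definition phi_majorant :: "real \<Rightarrow> real \<Rightarrow> real" where
  "phi_majorant \<alpha> \<theta> = (if 0 \<le> \<alpha> then 4 powr \<alpha>
     else (pi/6) powr \<alpha> * ((\<bar>\<theta>\<bar>/3) powr \<alpha> + ((pi - \<bar>\<theta>\<bar>)/3) powr \<alpha>))"

lemma phi_majorant_integrable_on:
  assumes "\<alpha> > -1"
  shows "phi_majorant \<alpha> integrable_on {-pi..pi}"
proof (cases "0 \<le> \<alpha>")
  case True
  have "(\<lambda>\<theta>::real. 4 powr \<alpha>) integrable_on {-pi..pi}"
    using integrable_const[of "4 powr \<alpha>" "-pi" pi] by simp
  thus ?thesis unfolding phi_majorant_def by (rule integrable_eq) (use True in simp)
next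
  case False
  have "(\<lambda>\<theta>. (pi/6) powr \<alpha> * (\<bar>\<theta>\<bar> powr \<alpha> / 3 powr \<alpha> + (pi - \<bar>\<theta>\<bar>) powr \<alpha> / 3 powr \<alpha>))
          integrable_on {-pi..pi}"
    by (intro integrable_on_mult_right integrable_add integrable_on_divide
          abs_powr_integrable_on pi_minus_abs_powr_integrable_on assms)
  thus ?thesis unfolding phi_majorant_def
    by (rule integrable_eq) (use False in \<open>auto simp: powr_divide\<close>)
qed

text \<open>Since \<open>u + v = \<pi>/3\<close>, one of \<open>u, v\<close> is at least \<open>\<pi>/6\<close>; this splits the product of the two
  singularities into a sum of integrable ones.\<close>

lemma powr_mult_powr_le_sum:
  fixes u v a :: real
  assumes "a \<le> 0" "u > 0" "v > 0" "u + v = pi / 3"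
  shows "u powr a * v powr a \<le> (pi/6) powr a * (u powr a + v powr a)"
proof (cases "u \<ge> pi / 6")
  case True
  have "u powr a * v powr a \<le> (pi/6) powr a * v powr a"
    by (rule mult_right_mono[OF powr_mono2'[OF assms(1) _ True]]) simp_all
  also have "\<dots> \<le> (pi/6) powr a * (u powr a + v powr a)" by (rule mult_left_mono) simp_all
  finally show ?thesis .
next
  case False
  hence "v \<ge> pi / 6" using assms(4) by simp
  have "u powr a * v powr a \<le> u powr a * (pi/6) powr a"
    by (rule mult_left_mono[OF powr_mono2'[OF assms(1) _ \<open>v \<ge> pi/6\<close>]]) simp_all
  also have "\<dots> \<le> (pi/6) powr a * (u powr a + v powr a)" by (simp add: mult.commute mult_left_mono)
  finally show ?thesis .
qed

lemma norm_phiR_le_majorant: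
  assumes "1/2 \<le> R" "R \<le> 1" "\<bar>\<theta>\<bar> \<le> pi" "\<theta> \<noteq> 0" "\<bar>\<theta>\<bar> \<noteq> pi"
  shows "norm (phiR \<alpha> R \<theta>) \<le> phi_majorant \<alpha> \<theta>"
proof -
  define z1 where "z1 = 1 - of_real R * cis \<theta>"
  define z2 where "z2 = 1 + of_real R * cis (-\<theta>)"
  have n: "norm (phiR \<alpha> R \<theta>) = cmod z1 powr \<alpha> * cmod z2 powr \<alpha>"
    unfolding phiR_def z1_def z2_def by (simp add: norm_mult norm_powr_real_powr')
  have up: "cmod z1 \<le> 2" "cmod z2 \<le> 2"
    unfolding z1_def z2_def using norm_one_minus_cis_le norm_one_plus_cis_le assms by auto
  have lo: "\<bar>\<theta>\<bar> / 3 \<le> cmod z1" "(pi - \<bar>\<theta>\<bar>) / 3 \<le> cmod z2"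
    unfolding z1_def z2_def using norm_one_minus_cis_ge norm_one_plus_cis_ge assms by auto
  have pos: "\<bar>\<theta>\<bar> / 3 > 0" "(pi - \<bar>\<theta>\<bar>) / 3 > 0" using assms by auto
  show ?thesis
  proof (cases "0 \<le> \<alpha>")
    case True
    have "cmod z1 powr \<alpha> * cmod z2 powr \<alpha> \<le> 2 powr \<alpha> * 2 powr \<alpha>"
      by (intro mult_mono powr_mono2 True up) simp_all
    also have "\<dots> = 4 powr \<alpha>" by (simp add: powr_mult[symmetric])
    finally show ?thesis using True by (simp add: n phi_majorant_def)
  next
    case False
    have "cmod z1 powr \<alpha> * cmod z2 powr \<alpha> \<le> (\<bar>\<theta>\<bar> / 3) powr \<alpha> * ((pi - \<bar>\<theta>\<bar>) / 3) powr \<alpha>"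
      using False pos lo by (intro mult_mono powr_mono2') simp_all
    also have "\<dots> \<le> (pi/6) powr \<alpha> * ((\<bar>\<theta>\<bar> / 3) powr \<alpha> + ((pi - \<bar>\<theta>\<bar>) / 3) powr \<alpha>)"
      by (rule powr_mult_powr_le_sum) (use False pos in \<open>auto simp: field_simps\<close>)
    finally show ?thesis using False by (simp add: n phi_majorant_def)
  qed
qed

text \<open>The majorant bound fails only at \<open>\<theta> \<in> {-\<pi>, 0, \<pi>}\<close>, where \<open>\<phi>\<^sub>\<alpha>\<close> may be singular.\<close>

definition punctured_interval :: "real set" where
  "punctured_interval = {-pi..pi} - {-pi, 0, pi}"

lemma mem_punctured_interval:
  "\<theta> \<in> punctured_interval \<Longrightarrow> \<bar>\<theta>\<bar> \<le> pi \<and> \<theta> \<noteq> 0 \<and> \<bar>\<theta>\<bar> \<noteq> pi"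
  by (auto simp: punctured_interval_def)

lemma negligible_punctured_interval_diff:
  "negligible (({-pi..pi} - punctured_interval) \<union> (punctured_interval - {-pi..pi}))"
  by (rule negligible_subset[of "{-pi,0,pi}"]) (auto simp: punctured_interval_def)

lemma integral_punctured_interval:
  fixes f :: "real \<Rightarrow> 'a::banach"
  shows "integral punctured_interval f = integral {-pi..pi} f"
  by (rule integral_spike_set; rule negligible_subset[OF negligible_punctured_interval_diff]) auto

lemma integrable_on_punctured_interval:
  fixes f :: "real \<Rightarrow> 'a::banach"
  shows "f integrable_on {-pi..pi} \<Longrightarrow> f integrable_on punctured_interval"
  using integrable_spike_set_eq[OF negligible_punctured_interval_diff, of f] by simp

lemma isCont_phiR_at_1:
  assumes "\<theta> \<in> punctured_interval"
  shows "isCont (\<lambda>R. phiR \<alpha> R \<theta>) 1"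
proof -
  have \<theta>: "\<bar>\<theta>\<bar> \<le> pi" "\<theta> \<noteq> 0" "\<bar>\<theta>\<bar> \<noteq> pi" using mem_punctured_interval[OF assms] by auto
  have "0 < \<theta>^2 / 8" using \<theta> by simp
  also have "\<dots> \<le> 1 - cos \<theta>" by (rule one_minus_cos_ge[OF \<theta>(1)])
  finally have "Re (1 - of_real 1 * cis \<theta>) > 0" by simp
  hence n1: "(1 - of_real 1 * cis \<theta>) \<notin> \<real>\<^sub>\<le>\<^sub>0" by (auto simp: complex_nonpos_Reals_iff)
  have "0 < (pi - \<bar>\<theta>\<bar>)^2 / 8" using \<theta> by simp
  also have "\<dots> \<le> 1 + cos \<theta>" by (rule one_plus_cos_ge[OF \<theta>(1)])
  finally have "Re (1 + of_real 1 * cis (-\<theta>)) > 0" by simp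
  hence n2: "(1 + of_real 1 * cis (-\<theta>)) \<notin> \<real>\<^sub>\<le>\<^sub>0" by (auto simp: complex_nonpos_Reals_iff)
  show ?thesis unfolding phiR_def
    by (intro isCont_mult isCont_powr_complex continuous_intros n1 n2)
qed

lemma phi_eq_phiR_1:
  assumes "\<theta> \<in> punctured_interval"
  shows "phi \<alpha> \<theta> = phiR \<alpha> 1 \<theta>"
proof -
  have "((\<lambda>R. phiR \<alpha> R \<theta>) \<longlongrightarrow> phiR \<alpha> 1 \<theta>) (at_left 1)"
    using isCont_phiR_at_1[OF assms] by (simp add: isCont_def Lim_at_imp_Lim_at_within)
  thus ?thesis unfolding phi_def by (rule tendsto_Lim[OF trivial_limit_at_left_real])
qed

definition radius_seq :: "nat \<Rightarrow> real" where
  "radius_seq k = 1 - 1 / (real k + 2)"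

lemma radius_seq_bounds: "1/2 \<le> radius_seq k" "radius_seq k < 1"
  by (auto simp: radius_seq_def field_simps)

lemma radius_seq_tendsto: "radius_seq \<longlonglongrightarrow> 1"
  unfolding radius_seq_def[abs_def] by real_asymp

lemma filterlim_radius_seq: "filterlim radius_seq (at_left 1) sequentially"
  by (rule tendsto_imp_filterlim_at_left[OF radius_seq_tendsto]) (simp add: radius_seq_bounds)

lemma fourier_coeff_phiR_tendsto:
  assumes "\<alpha> > -1"
  shows "(\<lambda>k. fourier_coeff (phiR \<alpha> (radius_seq k)) m) \<longlonglongrightarrow> fourier_coeff (phi \<alpha>) m"
proof -
  define e where "e = (\<lambda>\<theta>::real. exp (- \<i> * of_int m * of_real \<theta>))"
  define f where "f = (\<lambda>k \<theta>. phiR \<alpha> (radius_seq k) \<theta> * e \<theta>)"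
  have "f k integrable_on punctured_interval" for k
    unfolding f_def e_def
    by (intro integrable_on_punctured_interval integrable_continuous_interval continuous_on_mult
          continuous_on_phiR continuous_intros)
      (use radius_seq_bounds[of k] in auto)
  moreover have "phi_majorant \<alpha> integrable_on punctured_interval"
    by (rule integrable_on_punctured_interval[OF phi_majorant_integrable_on[OF assms]])
  moreover have "norm (f k \<theta>) \<le> phi_majorant \<alpha> \<theta>" if "\<theta> \<in> punctured_interval" for k \<theta>
    using norm_phiR_le_majorant[of "radius_seq k" \<theta> \<alpha>] mem_punctured_interval[OF that] radius_seq_bounds[of k]
    by (simp add: f_def e_def norm_mult norm_exp_eq_Re)
  moreover have "(\<lambda>k. f k \<theta>) \<longlonglongrightarrow> phi \<alpha> \<theta> * e \<theta>" if "\<theta> \<in> punctured_interval" for \<theta>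
    unfolding f_def phi_eq_phiR_1[OF that]
    by (intro tendsto_mult tendsto_const isCont_tendsto_compose[OF isCont_phiR_at_1[OF that]]
          radius_seq_tendsto)
  ultimately have "(\<lambda>k. integral punctured_interval (f k))
                     \<longlonglongrightarrow> integral punctured_interval (\<lambda>\<theta>. phi \<alpha> \<theta> * e \<theta>)"
    by (rule dominated_convergence(2))
  thus ?thesis
    unfolding fourier_coeff_def f_def e_def integral_punctured_interval by (intro tendsto_intros) auto
qed

lemma
  assumes "\<alpha> > -1" "\<alpha> \<notin> \<int>" "real n > \<alpha>"
  shows fourier_coeff_phi_nat: "fourier_coeff (phi \<alpha>) (int n) = of_real (acoef \<alpha> n * rho \<alpha> n)"
    and fourier_coeff_phi_neg_nat:
          "fourier_coeff (phi \<alpha>) (- int n) = (-1)^n * of_real (acoef \<alpha> n * rho \<alpha> n)"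
proof -
  have lim: "(\<lambda>k. of_real (phiR_coeff \<alpha> (radius_seq k) n)) \<longlonglongrightarrow> complex_of_real (acoef \<alpha> n * rho \<alpha> n)"
    by (intro tendsto_of_real filterlim_compose[OF tendsto_phiR_coeff[OF assms] filterlim_radius_seq])
  have R: "0 \<le> radius_seq k" "radius_seq k < 1" for k using radius_seq_bounds[of k] by auto
  show "fourier_coeff (phi \<alpha>) (int n) = of_real (acoef \<alpha> n * rho \<alpha> n)"
    using fourier_coeff_phiR_tendsto[OF assms(1), of "int n"] lim
    by (simp add: fourier_coeff_phiR_nat[OF assms(1) R] LIMSEQ_unique)
  show "fourier_coeff (phi \<alpha>) (- int n) = (-1)^n * of_real (acoef \<alpha> n * rho \<alpha> n)"
    using fourier_coeff_phiR_tendsto[OF assms(1), of "- int n"] tendsto_mult_left[OF lim, of "(-1)^n"]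
    by (simp add: fourier_coeff_phiR_neg_nat[OF assms(1) R] LIMSEQ_unique)
qed

lemma smallo_alternating_sign:
  fixes f g :: "nat \<Rightarrow> real"
  assumes "f \<in> o(g)"
  shows "(\<lambda>n. (-1)^n * f n) \<in> o(g)"
  using assms by (subst landau_o.small.norm_iff[symmetric]) (simp add: abs_mult)

theorem mainTheorem1:
  fixes \<alpha> :: real
  assumes "\<alpha> > -1/2" and "\<alpha> \<notin> \<int>"
  shows "(\<lambda>n::nat. fourier_coeff (phi \<alpha>) (int n)
            - of_real (2 powr \<alpha> / Gamma (-\<alpha>) * real n powr (-\<alpha> - 1)))
           \<in> o(\<lambda>n. of_real (real n powr (-\<alpha> - 1))) \<and>
         (\<lambda>n::nat. fourier_coeff (phi \<alpha>) (- int n)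
            - of_real ((-1) ^ n * (2 powr \<alpha> / Gamma (-\<alpha>)) * real n powr (-\<alpha> - 1)))
           \<in> o(\<lambda>n. of_real (real n powr (-\<alpha> - 1)))"
proof -
  have \<alpha>: "\<alpha> > -1" "\<alpha> \<notin> \<int>" using assms by auto
  let ?K = "2 powr \<alpha> / Gamma (-\<alpha>)"
  define c where "c n = acoef \<alpha> n * rho \<alpha> n - ?K * real n powr (-\<alpha> - 1)" for n
  have c: "c \<in> o(\<lambda>n. real n powr (-\<alpha> - 1))"
    unfolding c_def by (rule acoef_rho_asymp[OF \<alpha>])
  have pos: "eventually (\<lambda>n. fourier_coeff (phi \<alpha>) (int n) - of_real (?K * real n powr (-\<alpha> - 1))
          = of_real (c n)) sequentially"
    using eventually_gt_real_sequentially[of \<alpha>]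
    by eventually_elim (simp add: fourier_coeff_phi_nat[OF \<alpha>] c_def)
  have neg: "eventually (\<lambda>n. fourier_coeff (phi \<alpha>) (- int n)
          - of_real ((-1) ^ n * ?K * real n powr (-\<alpha> - 1)) = of_real ((-1)^n * c n)) sequentially"
    using eventually_gt_real_sequentially[of \<alpha>]
    by eventually_elim (simp add: fourier_coeff_phi_neg_nat[OF \<alpha>] c_def algebra_simps)
  have "(\<lambda>n. complex_of_real (c n)) \<in> o(\<lambda>n. of_real (real n powr (-\<alpha> - 1)))"
       "(\<lambda>n. complex_of_real ((-1)^n * c n)) \<in> o(\<lambda>n. of_real (real n powr (-\<alpha> - 1)))"
    using c smallo_alternating_sign[OF c] by (simp_all only: landau_o.small.of_real_iff)
  with landau_o.small.in_cong[OF pos] landau_o.small.in_cong[OF neg] show ?thesis by blast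
qed

end
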